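(* Let $A$ be an integral residuated $\vee$-semilattice. Then every $\to$-prime filter of $A$ is $\vee$-prime, every $\leadsto$-prime filter of $A$ is $\vee$-prime, and every prime filter of $A$ is $\vee$-prime.
   Context: A residuated poset is a partially ordered semigroup $(A;\cdot,\le)$ with binary operations $\to,\leadsto$ such that $x\cdot y\le z$ iff $x\le y\to z$ iff $y\le x\leadsto z$. It is a residuated $\vee$-semilattice if $(A,\le)$ is a join-semilattice, and integral if it has a greatest element $1$ that is a multiplicative identity. A filter is a nonempty upward closed subset closed under $\cdot$. A filter $F$ is $\to$-prime if for all $x,y$, $x\to y\in F$ or $y\to x\in F$; $\leadsto$-prime if for all $x,y$, $x\leadsto y\in F$ or $y\leadsto x\in F$; prime if both; $\vee$-prime if $x\vee y\in F$ implies $x\in F$ or $y\in F$. *)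

theory Defs
  imports Main
begin

text \<open>A residuated poset on the whole type 'a, given by a partial order le, a
multiplication m, and residuals r (for the arrow) and l (for the squiggly arrow):
m x y le z iff x le r y z iff y le l x z.\<close>

definition residuated_poset ::
  "('a \<Rightarrow> 'a \<Rightarrow> bool) \<Rightarrow> ('a \<Rightarrow> 'a \<Rightarrow> 'a) \<Rightarrow> ('a \<Rightarrow> 'a \<Rightarrow> 'a) \<Rightarrow> ('a \<Rightarrow> 'a \<Rightarrow> 'a) \<Rightarrow> bool" where
  "residuated_poset le m r l \<longleftrightarrow>
     (\<forall>x. le x x) \<and>
     (\<forall>x y. le x y \<and> le y x \<longrightarrow> x = y) \<and>
     (\<forall>x y z. le x y \<and> le y z \<longrightarrow> le x z) \<and>
     (\<forall>x y z. m (m x y) z = m x (m y z)) \<and>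
     (\<forall>x y z. le x y \<longrightarrow> le (m x z) (m y z) \<and> le (m z x) (m z y)) \<and>
     (\<forall>x y z. (le (m x y) z \<longleftrightarrow> le x (r y z)) \<and> (le x (r y z) \<longleftrightarrow> le y (l x z)))"

definition is_join :: "('a \<Rightarrow> 'a \<Rightarrow> bool) \<Rightarrow> ('a \<Rightarrow> 'a \<Rightarrow> 'a) \<Rightarrow> bool" where
  "is_join le j \<longleftrightarrow>
     (\<forall>x y. le x (j x y) \<and> le y (j x y) \<and> (\<forall>z. le x z \<and> le y z \<longrightarrow> le (j x y) z))"

definition integral_residuated_join_semilattice ::
  "('a \<Rightarrow> 'a \<Rightarrow> bool) \<Rightarrow> ('a \<Rightarrow> 'a \<Rightarrow> 'a) \<Rightarrow> ('a \<Rightarrow> 'a \<Rightarrow> 'a) \<Rightarrow> ('a \<Rightarrow> 'a \<Rightarrow> 'a)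
    \<Rightarrow> ('a \<Rightarrow> 'a \<Rightarrow> 'a) \<Rightarrow> 'a \<Rightarrow> bool" where
  "integral_residuated_join_semilattice le m r l j e \<longleftrightarrow>
     residuated_poset le m r l \<and> is_join le j \<and>
     (\<forall>x. le x e) \<and> (\<forall>x. m e x = x \<and> m x e = x)"

definition is_filter :: "('a \<Rightarrow> 'a \<Rightarrow> bool) \<Rightarrow> ('a \<Rightarrow> 'a \<Rightarrow> 'a) \<Rightarrow> 'a set \<Rightarrow> bool" where
  "is_filter le m F \<longleftrightarrow> F \<noteq> {} \<and>
     (\<forall>x y. x \<in> F \<and> le x y \<longrightarrow> y \<in> F) \<and>
     (\<forall>x y. x \<in> F \<and> y \<in> F \<longrightarrow> m x y \<in> F)"

definition op_prime :: "('a \<Rightarrow> 'a \<Rightarrow> 'a) \<Rightarrow> 'a set \<Rightarrow> bool" where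
  "op_prime r F \<longleftrightarrow> (\<forall>x y. r x y \<in> F \<or> r y x \<in> F)"

definition join_prime :: "('a \<Rightarrow> 'a \<Rightarrow> 'a) \<Rightarrow> 'a set \<Rightarrow> bool" where
  "join_prime j F \<longleftrightarrow> (\<forall>x y. j x y \<in> F \<longrightarrow> x \<in> F \<or> y \<in> F)"

end

theory Submission
  imports Defs
begin

text \<open>Modus ponens gives \<open>(x \<rightarrow> y) x \<le> y\<close>, and integrality gives \<open>(x \<rightarrow> y) y \<le> y\<close>;
hence \<open>(x \<rightarrow> y)(x \<squnion> y) \<le> y\<close>. So a filter containing \<open>x \<squnion> y\<close> and \<open>x \<rightarrow> y\<close> contains \<open>y\<close>,
and \<open>\<rightarrow>\<close>-primality provides \<open>x \<rightarrow> y\<close> or \<open>y \<rightarrow> x\<close>. The case of \<open>\<leadsto>\<close> is the mirror image,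
using \<open>(x \<squnion> y)(x \<leadsto> y) \<le> y\<close>.\<close>

lemma filter_upward_closed: "is_filter le m F \<Longrightarrow> x \<in> F \<Longrightarrow> le x y \<Longrightarrow> y \<in> F"
  unfolding is_filter_def by blast

lemma filter_mult_closed: "is_filter le m F \<Longrightarrow> x \<in> F \<Longrightarrow> y \<in> F \<Longrightarrow> m x y \<in> F"
  unfolding is_filter_def by blast

locale integral_residuated_semilattice =
  fixes le :: "'a \<Rightarrow> 'a \<Rightarrow> bool" and m r l j :: "'a \<Rightarrow> 'a \<Rightarrow> 'a" and e :: 'a
  assumes integral_residuated: "integral_residuated_join_semilattice le m r l j e"
begin

lemma le_reflexive: "le x x"
  and le_antisymmetric: "le x y \<Longrightarrow> le y x \<Longrightarrow> x = y"
  and mult_mono_left: "le x y \<Longrightarrow> le (m x z) (m y z)"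
  and mult_mono_right: "le x y \<Longrightarrow> le (m z x) (m z y)"
  and residuation_r: "le (m x y) z \<longleftrightarrow> le x (r y z)"
  and residuation_l: "le (m x y) z \<longleftrightarrow> le y (l x z)"
  using integral_residuated
  unfolding integral_residuated_join_semilattice_def residuated_poset_def by blast+

lemma join_upper_left: "le x (j x y)"
  and join_upper_right: "le y (j x y)"
  and join_least: "le x z \<Longrightarrow> le y z \<Longrightarrow> le (j x y) z"
  using integral_residuated
  unfolding integral_residuated_join_semilattice_def is_join_def by blast+

lemma le_top: "le x e"
  and unit_left: "m e x = x"
  and unit_right: "m x e = x"
  using integral_residuated
  unfolding integral_residuated_join_semilattice_def by blast+

lemma join_commute: "j x y = j y x"
  by (intro le_antisymmetric join_least join_upper_left join_upper_right)

lemma mult_le_right_factor: "le (m x y) y"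
  using mult_mono_left[OF le_top, of x y] by (simp add: unit_left)

lemma mult_le_left_factor: "le (m x y) x"
  using mult_mono_right[OF le_top, of x y] by (simp add: unit_right)

lemma r_modus_ponens: "le (m (r x y) x) y"
  using residuation_r le_reflexive by blast

lemma l_modus_ponens: "le (m x (l x y)) y"
  using residuation_l le_reflexive by blast

lemma r_mult_join_le: "le (m (r x y) (j x y)) y"
proof -
  have "le x (l (r x y) y)"
    using r_modus_ponens residuation_l by blast
  moreover have "le y (l (r x y) y)"
    using mult_le_right_factor residuation_l by blast
  ultimately show ?thesis
    using join_least residuation_l by blast
qed

lemma join_mult_l_le: "le (m (j x y) (l x y)) y"
proof -
  have "le x (r (l x y) y)"
    using l_modus_ponens residuation_r by blast
  moreover have "le y (r (l x y) y)"
    using mult_le_left_factor residuation_r by blast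
  ultimately show ?thesis
    using join_least residuation_r by blast
qed

lemma filter_mem_if_join_and_r_mem:
  assumes "is_filter le m F" "j x y \<in> F" "r x y \<in> F"
  shows "y \<in> F"
  using assms filter_mult_closed filter_upward_closed r_mult_join_le by metis

lemma filter_mem_if_join_and_l_mem:
  assumes "is_filter le m F" "j x y \<in> F" "l x y \<in> F"
  shows "y \<in> F"
  using assms filter_mult_closed filter_upward_closed join_mult_l_le by metis

lemma join_prime_if_r_prime: "is_filter le m F \<Longrightarrow> op_prime r F \<Longrightarrow> join_prime j F"
  unfolding op_prime_def join_prime_def
  by (metis filter_mem_if_join_and_r_mem join_commute)

lemma join_prime_if_l_prime: "is_filter le m F \<Longrightarrow> op_prime l F \<Longrightarrow> join_prime j F"
  unfolding op_prime_def join_prime_def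
  by (metis filter_mem_if_join_and_l_mem join_commute)

end

theorem lemma5p2:
  fixes le :: "'a \<Rightarrow> 'a \<Rightarrow> bool" and m r l j :: "'a \<Rightarrow> 'a \<Rightarrow> 'a" and e :: 'a
  assumes "integral_residuated_join_semilattice le m r l j e"
  shows "(\<forall>F. is_filter le m F \<and> op_prime r F \<longrightarrow> join_prime j F) \<and>
         (\<forall>F. is_filter le m F \<and> op_prime l F \<longrightarrow> join_prime j F) \<and>
         (\<forall>F. is_filter le m F \<and> op_prime r F \<and> op_prime l F \<longrightarrow> join_prime j F)"
proof -
  interpret integral_residuated_semilattice le m r l j e
    using assms by unfold_locales
  show ?thesis
    using join_prime_if_r_prime join_prime_if_l_prime by blast
qed

end
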